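(* Let $n$ be an odd natural number with $n\neq 2^k-1$ for all $k$. Then there exist positive integers $a,b$ such that $a$ and $b$ are odd, $2a+3b=n$, and $$\frac{n\,(a+b-1)!}{a!\,b!}\equiv 1\pmod 2.$$ *)

theory Defs
  imports Complex_Main
begin

end

theory Submission
  imports Defs "HOL-Computational_Algebra.Primes"
begin

(* Since n is odd and not of the form 2^k - 1, we can write n + 1 = 2^v (2w + 3) with v >= 1;
   take a = 2^v w + 1 and b = 2^v - 1. With s = a + b - 1 = (w + 1) 2^v - 1 the quotient is
   n s! / (a! b!) = 2 C(s, a - 1) + 3 C(s, b - 1), and C(s, j) is odd for all j < 2^v
   (a special case of Lucas' theorem): the ratio (s - j) / (j + 1) of consecutive coefficients
   has numerator and denominator summing to a multiple of 2^v, so both carry the same power of 2. *)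

lemma equal_power2_factors_if_dvd_add:
  fixes x y :: nat
  assumes "2 ^ v dvd x + y" "0 < y" "y < 2 ^ v"
  shows "\<exists>k x' y'. x = 2 ^ k * x' \<and> y = 2 ^ k * y' \<and> odd x' \<and> odd y'"
  using assms
proof (induction v arbitrary: x y)
  case 0
  then show ?case by simp
next
  case (Suc v)
  have "even (x + y)"
    using Suc.prems(1) dvd_mult_left by (metis power_Suc)
  show ?case
  proof (cases "odd y")
    case True
    with \<open>even (x + y)\<close> have "x = 2 ^ 0 * x \<and> y = 2 ^ 0 * y \<and> odd x \<and> odd y"
      by simp
    then show ?thesis by blast
  next
    case False
    with \<open>even (x + y)\<close> obtain x' y' where x: "x = 2 * x'" and y: "y = 2 * y'"
      by (metis evenE even_add)
    have "2 ^ v dvd x' + y'"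
      using Suc.prems(1) nat_mult_dvd_cancel_disj[of 2 "2 ^ v" "x' + y'"] x y by simp
    moreover have "0 < y'" "y' < 2 ^ v"
      using Suc.prems(2,3) y by auto
    ultimately obtain k x'' y'' where "x' = 2 ^ k * x''" "y' = 2 ^ k * y''" "odd x''" "odd y''"
      using Suc.IH by blast
    with x y have "x = 2 ^ Suc k * x'' \<and> y = 2 ^ Suc k * y'' \<and> odd x'' \<and> odd y''"
      by simp
    then show ?thesis by blast
  qed
qed

lemma odd_choose_mult_power2_minus_1:
  fixes K v j :: nat
  assumes "0 < K" "j < 2 ^ v"
  shows "odd ((K * 2 ^ v - 1) choose j)"
  using assms(2)
proof (induction j)
  case 0
  then show ?case by simp
next
  case (Suc j)
  define N where "N = K * 2 ^ v - 1"
  have rec: "Suc j * (N choose Suc j) = (N - j) * (N choose j)"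
    by (metis binomial_absorption binomial_absorb_comp)
  have "2 ^ v \<le> K * 2 ^ v"
    using assms(1) by simp
  then have "(N - j) + Suc j = K * 2 ^ v"
    using Suc.prems unfolding N_def by linarith
  then have "2 ^ v dvd (N - j) + Suc j"
    by simp
  then obtain k x' y' where "N - j = 2 ^ k * x'" "Suc j = 2 ^ k * y'" "odd x'" "odd y'"
    using equal_power2_factors_if_dvd_add[of v "N - j" "Suc j"] Suc.prems by blast
  with rec have "y' * (N choose Suc j) = x' * (N choose j)"
    by (simp add: mult.assoc)
  then have "odd (N choose Suc j) \<longleftrightarrow> odd (N choose j)"
    using \<open>odd x'\<close> \<open>odd y'\<close> by (metis even_mult_iff)
  with Suc show ?case
    unfolding N_def by simp
qed

lemma mult_fact_eq_choose_mult_facts: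
  fixes a b :: nat
  assumes "0 < a"
  shows "a * fact (a + b - 1) = ((a + b - 1) choose (a - 1)) * fact a * fact b"
proof -
  have "a - 1 \<le> a + b - 1" "a + b - 1 - (a - 1) = b"
    using assms by auto
  then have "fact (a - 1) * fact b * ((a + b - 1) choose (a - 1)) = fact (a + b - 1)"
    using binomial_fact_lemma[of "a - 1" "a + b - 1"] by simp
  moreover have "a * fact (a - 1) = fact a"
    using fact_reduce[OF assms, where 'a = nat] by simp
  ultimately show ?thesis
    by (metis mult.assoc mult.commute)
qed

lemma linear_fact_quotient_eq_choose_sum:
  fixes a b p q :: nat
  assumes "0 < a" "0 < b"
  shows "(of_nat (p * a + q * b) * fact (a + b - 1) / (fact a * fact b) :: 'a :: field_char_0)
    = of_nat (p * ((a + b - 1) choose (a - 1)) + q * ((a + b - 1) choose (b - 1)))"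
proof -
  define s where "s = a + b - 1"
  have fa: "a * fact s = (s choose (a - 1)) * fact a * fact b"
    unfolding s_def by (rule mult_fact_eq_choose_mult_facts[OF assms(1)])
  have fb: "b * fact s = (s choose (b - 1)) * fact a * fact b"
    unfolding s_def using mult_fact_eq_choose_mult_facts[OF assms(2), of a]
    by (simp add: add.commute mult.commute mult.assoc)
  have "(p * a + q * b) * fact s = p * (a * fact s) + q * (b * fact s)"
    by (simp add: algebra_simps)
  also have "\<dots> = (p * (s choose (a - 1)) + q * (s choose (b - 1))) * (fact a * fact b)"
    unfolding fa fb by (simp add: algebra_simps)
  finally have "(of_nat (p * a + q * b) * fact s :: 'a)
      = of_nat (p * (s choose (a - 1)) + q * (s choose (b - 1))) * (fact a * fact b)"
    by (metis of_nat_fact of_nat_mult)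
  then show ?thesis
    unfolding s_def by (simp add: field_simps)
qed

lemma odd_non_mersenne_decompose:
  fixes n :: nat
  assumes "odd n" "\<forall>k. n \<noteq> 2 ^ k - 1"
  obtains v w where "0 < v" "n + 1 = 2 ^ v * (2 * w + 3)"
proof -
  define v where "v = multiplicity 2 (n + 1)"
  obtain u where vu: "n + 1 = 2 ^ v * u" "odd u"
    using multiplicity_decompose'[of "n + 1" 2] unfolding v_def by (simp, blast)
  have "0 < v"
    using vu assms(1) by (cases v) auto
  have "u \<noteq> 1"
    using vu assms(2) by (metis add_diff_cancel_right' mult_1_right)
  then have "\<exists>w. u = 2 * w + 3"
    using vu(2) by presburger
  then obtain w where "u = 2 * w + 3" ..
  with \<open>0 < v\<close> vu(1) show ?thesis
    using that by blast
qed

lemma odd_integer_linear_fact_quotient: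
  fixes a b v :: nat
  assumes "0 < a" "0 < b" "b \<le> 2 ^ v" "2 ^ v dvd a + b"
  shows "\<exists>m :: int. odd m \<and>
    (of_nat (2 * a + 3 * b) * fact (a + b - 1) / (fact a * fact b) :: 'a :: field_char_0) = of_int m"
proof -
  obtain K where K: "a + b = K * 2 ^ v"
    using assms(4) by (metis dvd_def mult.commute)
  with assms(1) have "0 < K"
    by (cases K) auto
  with K assms(2,3) have "odd ((a + b - 1) choose (b - 1))"
    using odd_choose_mult_power2_minus_1[of K "b - 1" v] by simp
  then have "odd (int (2 * ((a + b - 1) choose (a - 1)) + 3 * ((a + b - 1) choose (b - 1))))"
    by simp
  moreover have "(of_nat (2 * a + 3 * b) * fact (a + b - 1) / (fact a * fact b) :: 'a)
      = of_int (int (2 * ((a + b - 1) choose (a - 1)) + 3 * ((a + b - 1) choose (b - 1))))"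
    using linear_fact_quotient_eq_choose_sum[OF assms(1,2), of 2 3] by simp
  ultimately show ?thesis
    by blast
qed

theorem lemma6p5:
  fixes n :: nat
  assumes "odd n"
    and "\<forall>k::nat. n \<noteq> 2 ^ k - 1"
  shows "\<exists>a b :: nat. a > 0 \<and> b > 0 \<and> odd a \<and> odd b \<and> 2 * a + 3 * b = n \<and>
           (\<exists>m :: int. odd m \<and>
              (of_nat n * fact (a + b - 1) / (fact a * fact b) :: rat) = of_int m)"
proof -
  obtain v w where "0 < v" and n: "n + 1 = 2 ^ v * (2 * w + 3)"
    using odd_non_mersenne_decompose assms by blast
  define a where "a = 2 ^ v * w + 1"
  define b where "b = 2 ^ v - (1::nat)"
  have b: "b + 1 = 2 ^ v" "0 < b" "odd b"
    using one_less_power[of "2::nat" v] \<open>0 < v\<close> unfolding b_def by auto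
  have a: "0 < a" "odd a"
    using \<open>0 < v\<close> unfolding a_def by auto
  have "2 * a + 3 * b + 1 = 2 ^ v * (2 * w + 3)"
    unfolding a_def using b(1) by (simp add: algebra_simps)
  with n have nab: "2 * a + 3 * b = n"
    by linarith
  have "a + b = (w + 1) * 2 ^ v"
    unfolding a_def using b(1) by (simp add: algebra_simps)
  then have "b \<le> 2 ^ v" "2 ^ v dvd a + b"
    using b(1) by auto
  then obtain m :: int where "odd m"
    "(of_nat (2 * a + 3 * b) * fact (a + b - 1) / (fact a * fact b) :: rat) = of_int m"
    using odd_integer_linear_fact_quotient[OF a(1) b(2)] by blast
  with nab a b show ?thesis
    by blast
qed

end
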